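(* Let $H<G$ be groups with $H$ co-sofic in $G$. Then $H<G$ is relatively sofic over $G$.
   Context: $H$ is co-sofic in $G$ if there exist two decreasing sequences $(G_i)_{i\in\mathbb N}$ and $(H_i)_{i\in\mathbb N}$ of subgroups of $G$ such that $\bigcap_i G_i=H$, $H_i<G_i$, $H_i\triangleleft G$, $G/H_i$ is sofic, and $G_i/H_i$ is amenable for all $i$. $H<G$ is relatively sofic over a group $K$ if there exist a sequence of inclusions of groups $(H'_i<G'_i)_{i\in\mathbb N}$ with all $G'_i$ sofic and all $H'_i$ amenable, a free ultrafilter $\omega$ on $\mathbb N$, and an embedding $\pi:G\to\prod_\omega(G'_i\times K)$ into the algebraic ultraproduct such that $\pi(G)\cap\prod_\omega(H'_i\times K)=\pi(H)$. The algebraic ultraproduct is $\prod_\omega L_i=(\prod_i L_i)/N$ with $N=\{(g_i):\{i:g_i=1\}\in\omega\}$. *)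

theory Defs
  imports "HOL-Algebra.Algebra"
begin

definition hamming :: "nat \<Rightarrow> (nat \<Rightarrow> nat) \<Rightarrow> (nat \<Rightarrow> nat) \<Rightarrow> real" where
  "hamming n \<sigma> \<tau> = real (card {k. k < n \<and> \<sigma> k \<noteq> \<tau> k}) / real n"

definition sofic :: "('a, 'b) monoid_scheme \<Rightarrow> bool" where
  "sofic G \<longleftrightarrow> group G \<and>
     (\<forall>F \<epsilon>. finite F \<and> F \<subseteq> carrier G \<and> \<epsilon> > (0::real) \<longrightarrow>
       (\<exists>n::nat. n > 0 \<and> (\<exists>\<phi> :: 'a \<Rightarrow> nat \<Rightarrow> nat.
          (\<forall>g \<in> carrier G. \<phi> g permutes {..<n}) \<and>
          (\<forall>g \<in> F. \<forall>h \<in> F. hamming n (\<phi> (g \<otimes>\<^bsub>G\<^esub> h)) (\<phi> g \<circ> \<phi> h) < \<epsilon>) \<and>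
          (\<forall>g \<in> F. g \<noteq> \<one>\<^bsub>G\<^esub> \<longrightarrow> hamming n (\<phi> g) id > 1 - \<epsilon>))))"

definition amenable :: "('a, 'b) monoid_scheme \<Rightarrow> bool" where
  "amenable G \<longleftrightarrow> group G \<and>
     (\<forall>F \<epsilon>. finite F \<and> F \<subseteq> carrier G \<and> \<epsilon> > (0::real) \<longrightarrow>
       (\<exists>A. finite A \<and> A \<noteq> {} \<and> A \<subseteq> carrier G \<and>
          (\<forall>g \<in> F. real (card (((g <#\<^bsub>G\<^esub> A) - A) \<union> (A - (g <#\<^bsub>G\<^esub> A)))) < \<epsilon> * real (card A))))"

definition cosofic :: "('a, 'b) monoid_scheme \<Rightarrow> 'a set \<Rightarrow> bool" where
  "cosofic G H \<longleftrightarrow>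
     (\<exists>Gs Hs :: nat \<Rightarrow> 'a set.
        (\<forall>i. Gs (Suc i) \<subseteq> Gs i) \<and> (\<forall>i. Hs (Suc i) \<subseteq> Hs i) \<and>
        (\<Inter>i. Gs i) = H \<and>
        (\<forall>i. subgroup (Gs i) G \<and> subgroup (Hs i) (G\<lparr>carrier := Gs i\<rparr>) \<and>
             Hs i \<lhd> G \<and>
             sofic (G Mod Hs i) \<and>
             amenable ((G\<lparr>carrier := Gs i\<rparr>) Mod Hs i)))"

definition free_ultrafilter :: "nat filter \<Rightarrow> bool" where
  "free_ultrafilter \<omega> \<longleftrightarrow> \<omega> \<noteq> bot \<and>
     (\<forall>A. eventually (\<lambda>i. i \<in> A) \<omega> \<or> eventually (\<lambda>i. i \<notin> A) \<omega>) \<and>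
     (\<forall>n. \<not> eventually (\<lambda>i. i = n) \<omega>)"

definition prod_grp :: "(nat \<Rightarrow> ('c, 'm) monoid_scheme) \<Rightarrow> (nat \<Rightarrow> 'c) monoid" where
  "prod_grp L = \<lparr>carrier = Pi UNIV (\<lambda>i. carrier (L i)),
                 monoid.mult = (\<lambda>f g i. f i \<otimes>\<^bsub>L i\<^esub> g i),
                 one = (\<lambda>i. \<one>\<^bsub>L i\<^esub>)\<rparr>"

definition ultra_null :: "nat filter \<Rightarrow> (nat \<Rightarrow> ('c, 'm) monoid_scheme) \<Rightarrow> (nat \<Rightarrow> 'c) set" where
  "ultra_null \<omega> L = {f \<in> carrier (prod_grp L). eventually (\<lambda>i. f i = \<one>\<^bsub>L i\<^esub>) \<omega>}"

definition ultraprod :: "nat filter \<Rightarrow> (nat \<Rightarrow> ('c, 'm) monoid_scheme) \<Rightarrow> (nat \<Rightarrow> 'c) set monoid" where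
  "ultraprod \<omega> L = prod_grp L Mod ultra_null \<omega> L"

definition ultra_subset :: "nat filter \<Rightarrow> (nat \<Rightarrow> ('c, 'm) monoid_scheme) \<Rightarrow> (nat \<Rightarrow> 'c set) \<Rightarrow> (nat \<Rightarrow> 'c) set set" where
  "ultra_subset \<omega> L S = {ultra_null \<omega> L #>\<^bsub>prod_grp L\<^esub> f | f. f \<in> carrier (prod_grp L) \<and> (\<forall>i. f i \<in> S i)}"

text \<open>H < G is relatively sofic over K, with the witness groups G'_i having elements of
  type 'w (given by the first argument).\<close>
definition relatively_sofic_in ::
  "'w itself \<Rightarrow> ('a, 'b) monoid_scheme \<Rightarrow> 'a set \<Rightarrow> ('k, 'c) monoid_scheme \<Rightarrow> bool" where
  "relatively_sofic_in _ G H K \<longleftrightarrow>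
     (\<exists>(G' :: nat \<Rightarrow> 'w monoid) (H' :: nat \<Rightarrow> 'w set).
        (\<forall>i. group (G' i) \<and> sofic (G' i) \<and> subgroup (H' i) (G' i) \<and>
             amenable ((G' i)\<lparr>carrier := H' i\<rparr>)) \<and>
        (\<exists>\<omega> \<pi>. free_ultrafilter \<omega> \<and>
           \<pi> \<in> hom G (ultraprod \<omega> (\<lambda>i. G' i \<times>\<times> K)) \<and> inj_on \<pi> (carrier G) \<and>
           \<pi> ` carrier G \<inter> ultra_subset \<omega> (\<lambda>i. G' i \<times>\<times> K) (\<lambda>i. H' i \<times> carrier K) = \<pi> ` H))"

end

theory Submission
  imports Defs
begin

(* Put G'_i = G/H_i and H'_i = G_i/H_i and send g to the class of (H_i g, g)_i in the
   ultraproduct of the G'_i x G.  The second coordinate makes this embedding injective.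
   The image of g lies in the ultraproduct of the H'_i x G iff g is in G_i for
   omega-almost all i; since the G_i decrease and omega is free, this happens iff g lies
   in every G_i, i.e. in H. *)

lemma exists_maximal_proper_filter_le:
  fixes F :: "'a filter"
  assumes "F \<noteq> bot"
  shows "\<exists>U. U \<noteq> bot \<and> U \<le> F \<and> (\<forall>V. V \<noteq> bot \<longrightarrow> V \<le> U \<longrightarrow> V = U)"
proof -
  \<comment> \<open>Zorn's lemma for proper filters below F, ordered by refinement\<close>
  let ?R = "{(V, U). U \<noteq> bot \<and> U \<le> V \<and> V \<le> F}"
  have field: "Field ?R = {U. U \<noteq> bot \<and> U \<le> F}"
    by (auto simp: Field_def bot_unique)
  have "\<exists>U\<in>Field ?R. \<forall>V\<in>Field ?R. (U, V) \<in> ?R \<longrightarrow> V = U"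
  proof (rule Zorns_po_lemma)
    show "Partial_order ?R"
      by (auto simp: partial_order_on_def preorder_on_def
          antisym_def refl_on_def trans_def Field_def bot_unique)
    show "\<exists>U\<in>Field ?R. \<forall>V\<in>C. (V, U) \<in> ?R" if C: "C \<in> Chains ?R" for C
    proof (cases "C = {}")
      case True
      then show ?thesis using assms unfolding field by auto
    next
      case False
      have directed: "\<exists>W\<in>C. W \<le> inf U V" if "U \<in> C" "V \<in> C" for U V
        using C that by (auto simp: Chains_def inf_absorb1 inf_absorb2)
      have "Inf C \<noteq> bot"
        using C eventually_Inf_base[OF False directed]
        by (auto simp: trivial_limit_def Chains_def)
      moreover from False obtain V where "V \<in> C" by auto
      with C have "Inf C \<le> F"
        by (auto intro!: Inf_lower2[of V] simp: Chains_def)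
      ultimately show ?thesis
        using C unfolding field by (auto intro!: bexI[of _ "Inf C"] Inf_lower simp: Chains_def)
    qed
  qed
  then show ?thesis
    unfolding field by (auto intro: order_trans)
qed

lemma maximal_proper_filter_ultra:
  assumes max: "\<And>V. V \<noteq> bot \<Longrightarrow> V \<le> U \<Longrightarrow> V = U"
  shows "eventually (\<lambda>x. x \<in> A) U \<or> eventually (\<lambda>x. x \<notin> A) U"
proof (rule disjCI)
  assume "\<not> eventually (\<lambda>x. x \<notin> A) U"
  then have "inf U (principal A) \<noteq> bot"
    by (simp add: trivial_limit_def eventually_inf_principal)
  then have "inf U (principal A) = U"
    by (rule max) simp
  moreover have "eventually (\<lambda>x. x \<in> A) (inf U (principal A))"
    by (simp add: eventually_inf_principal)
  ultimately show "eventually (\<lambda>x. x \<in> A) U"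
    by simp
qed

lemma free_ultrafilter_exists: "\<exists>\<omega>. free_ultrafilter \<omega>"
proof -
  obtain U :: "nat filter" where U: "U \<noteq> bot" "U \<le> cofinite"
    and max: "\<And>V. V \<noteq> bot \<Longrightarrow> V \<le> U \<Longrightarrow> V = U"
    using exists_maximal_proper_filter_le[of cofinite] by auto
  have "\<not> eventually (\<lambda>i. i = n) U" for n
  proof
    assume "eventually (\<lambda>i. i = n) U"
    moreover have "eventually (\<lambda>i. i \<noteq> n) U"
      using U(2) by (rule filter_leD) (simp add: eventually_cofinite)
    ultimately have "eventually (\<lambda>i. False) U"
      by (rule eventually_elim2) simp
    with U(1) show False by simp
  qed
  then have "free_ultrafilter U"
    unfolding free_ultrafilter_def using U(1) maximal_proper_filter_ultra[OF max] by blast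
  then show ?thesis ..
qed

lemma free_ultrafilter_eventually_ge:
  assumes "free_ultrafilter \<omega>"
  shows "eventually (\<lambda>i. j \<le> i) \<omega>"
proof -
  have "eventually (\<lambda>i. i \<noteq> m) \<omega>" for m
  proof -
    have "eventually (\<lambda>i. i \<in> {m}) \<omega> \<or> eventually (\<lambda>i. i \<notin> {m}) \<omega>"
      and "\<not> eventually (\<lambda>i. i = m) \<omega>"
      using assms unfolding free_ultrafilter_def by blast+
    then show ?thesis by simp
  qed
  then have "eventually (\<lambda>i. \<forall>m\<in>{..<j}. i \<noteq> m) \<omega>"
    by (intro eventually_ball_finite) auto
  then show ?thesis
    by (rule eventually_mono) (auto simp: not_le[symmetric])
qed

lemma free_ultrafilter_eventually_decseq_mem:
  assumes "free_ultrafilter \<omega>" and dec: "\<And>i. A (Suc i) \<subseteq> A i"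
    and ev: "eventually (\<lambda>i. x \<in> A i) \<omega>"
  shows "x \<in> (\<Inter>i. A i)"
proof
  fix j
  have "eventually (\<lambda>i. j \<le> i \<and> x \<in> A i) \<omega>"
    using free_ultrafilter_eventually_ge[OF assms(1)] ev by (rule eventually_conj)
  then obtain i where "j \<le> i" "x \<in> A i"
    using assms(1) eventually_happens' unfolding free_ultrafilter_def by blast
  then show "x \<in> A j"
    using lift_Suc_antimono_le[of A, OF dec] by blast
qed

lemma prod_grp_eq_product_group: "prod_grp L = product_group UNIV L"
  by (simp add: prod_grp_def product_group_def PiE_UNIV_domain restrict_UNIV)

lemma group_prod_grp: "(\<And>i. group (L i)) \<Longrightarrow> group (prod_grp L)"
  unfolding prod_grp_eq_product_group by simp

lemma carrier_prod_grp: "carrier (prod_grp L) = (\<Pi> i\<in>UNIV. carrier (L i))"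
  by (simp add: prod_grp_def)

lemma one_prod_grp: "\<one>\<^bsub>prod_grp L\<^esub> = (\<lambda>i. \<one>\<^bsub>L i\<^esub>)"
  by (simp add: prod_grp_def)

lemma mult_prod_grp: "x \<otimes>\<^bsub>prod_grp L\<^esub> y = (\<lambda>i. x i \<otimes>\<^bsub>L i\<^esub> y i)"
  by (simp add: prod_grp_def)

lemma inv_prod_grp:
  assumes "\<And>i. group (L i)" and "x \<in> carrier (prod_grp L)"
  shows "inv\<^bsub>prod_grp L\<^esub> x = (\<lambda>i. inv\<^bsub>L i\<^esub> x i)"
  using assms unfolding prod_grp_eq_product_group by (simp add: PiE_UNIV_domain restrict_UNIV)

lemma normal_ultra_null:
  assumes L: "\<And>i. group (L i)"
  shows "ultra_null \<omega> L \<lhd> prod_grp L"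
proof -
  interpret P: group "prod_grp L" using L by (rule group_prod_grp)
  have Li: "x i \<in> carrier (L i)" if "x \<in> carrier (prod_grp L)" for x i
    using that by (auto simp: carrier_prod_grp)
  have memI: "x \<in> ultra_null \<omega> L"
    if "x \<in> carrier (prod_grp L)" and "eventually (\<lambda>i. x i = \<one>\<^bsub>L i\<^esub>) \<omega>" for x
    using that by (simp add: ultra_null_def)
  have sub: "subgroup (ultra_null \<omega> L) (prod_grp L)"
  proof (rule P.subgroupI)
    show "ultra_null \<omega> L \<subseteq> carrier (prod_grp L)"
      by (auto simp: ultra_null_def)
    show "ultra_null \<omega> L \<noteq> {}"
      using memI[OF P.one_closed] by (auto simp: one_prod_grp)
  next
    fix x assume "x \<in> ultra_null \<omega> L"
    then have x: "x \<in> carrier (prod_grp L)" and ev: "eventually (\<lambda>i. x i = \<one>\<^bsub>L i\<^esub>) \<omega>"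
      by (auto simp: ultra_null_def)
    have "eventually (\<lambda>i. (inv\<^bsub>prod_grp L\<^esub> x) i = \<one>\<^bsub>L i\<^esub>) \<omega>"
      using ev by (rule eventually_mono)
        (simp add: inv_prod_grp[OF L x] monoid.inv_one[OF group.is_monoid[OF L]])
    then show "inv\<^bsub>prod_grp L\<^esub> x \<in> ultra_null \<omega> L"
      using P.inv_closed[OF x] by (blast intro: memI)
  next
    fix x y assume "x \<in> ultra_null \<omega> L" "y \<in> ultra_null \<omega> L"
    then have x: "x \<in> carrier (prod_grp L)" and evx: "eventually (\<lambda>i. x i = \<one>\<^bsub>L i\<^esub>) \<omega>"
      and y: "y \<in> carrier (prod_grp L)" and evy: "eventually (\<lambda>i. y i = \<one>\<^bsub>L i\<^esub>) \<omega>"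
      by (auto simp: ultra_null_def)
    have "eventually (\<lambda>i. (x \<otimes>\<^bsub>prod_grp L\<^esub> y) i = \<one>\<^bsub>L i\<^esub>) \<omega>"
      using evx evy by (rule eventually_elim2)
        (simp add: mult_prod_grp monoid.l_one[OF group.is_monoid[OF L]]
          group.is_monoid[OF L] monoid.one_closed)
    then show "x \<otimes>\<^bsub>prod_grp L\<^esub> y \<in> ultra_null \<omega> L"
      using P.m_closed[OF x y] by (blast intro: memI)
  qed
  show ?thesis
  proof (subst P.normal_inv_iff, intro conjI ballI sub)
    fix x h assume x: "x \<in> carrier (prod_grp L)" and "h \<in> ultra_null \<omega> L"
    then have h: "h \<in> carrier (prod_grp L)" and ev: "eventually (\<lambda>i. h i = \<one>\<^bsub>L i\<^esub>) \<omega>"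
      by (auto simp: ultra_null_def)
    have "eventually (\<lambda>i. (x \<otimes>\<^bsub>prod_grp L\<^esub> h \<otimes>\<^bsub>prod_grp L\<^esub> inv\<^bsub>prod_grp L\<^esub> x) i = \<one>\<^bsub>L i\<^esub>) \<omega>"
      using ev by (rule eventually_mono)
        (simp add: mult_prod_grp inv_prod_grp[OF L x] Li[OF x] group.r_inv[OF L]
          monoid.r_one[OF group.is_monoid[OF L]])
    then show "x \<otimes>\<^bsub>prod_grp L\<^esub> h \<otimes>\<^bsub>prod_grp L\<^esub> inv\<^bsub>prod_grp L\<^esub> x \<in> ultra_null \<omega> L"
      using x h by (blast intro: memI)
  qed
qed

lemma ultra_null_rcos_eqD:
  assumes L: "\<And>i. group (L i)"
    and x: "x \<in> carrier (prod_grp L)" and y: "y \<in> carrier (prod_grp L)"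
    and eq: "ultra_null \<omega> L #>\<^bsub>prod_grp L\<^esub> x = ultra_null \<omega> L #>\<^bsub>prod_grp L\<^esub> y"
  shows "eventually (\<lambda>i. x i = y i) \<omega>"
proof -
  interpret P: group "prod_grp L" using L by (rule group_prod_grp)
  interpret N: normal "ultra_null \<omega> L" "prod_grp L" using L by (rule normal_ultra_null)
  have "x \<in> ultra_null \<omega> L #>\<^bsub>prod_grp L\<^esub> y"
    using eq P.rcos_self[OF x N.subgroup_axioms] by simp
  then have "x \<otimes>\<^bsub>prod_grp L\<^esub> inv\<^bsub>prod_grp L\<^esub> y \<in> ultra_null \<omega> L"
    by (rule N.rcos_module_imp[OF P.is_group y])
  then have "eventually (\<lambda>i. (x \<otimes>\<^bsub>prod_grp L\<^esub> inv\<^bsub>prod_grp L\<^esub> y) i = \<one>\<^bsub>L i\<^esub>) \<omega>"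
    unfolding ultra_null_def by blast
  then have "eventually (\<lambda>i. x i \<otimes>\<^bsub>L i\<^esub> inv\<^bsub>L i\<^esub> y i = \<one>\<^bsub>L i\<^esub>) \<omega>"
    by (simp only: mult_prod_grp inv_prod_grp[OF L y])
  then show ?thesis
  proof (rule eventually_mono)
    fix i
    interpret Li: group "L i" by (rule L)
    have "x i \<in> carrier (L i)" "y i \<in> carrier (L i)"
      using x y by (auto simp: carrier_prod_grp)
    then show "x i \<otimes>\<^bsub>L i\<^esub> inv\<^bsub>L i\<^esub> y i = \<one>\<^bsub>L i\<^esub> \<Longrightarrow> x i = y i"
      using Li.inv_solve_right'[OF Li.one_closed] by simp
  qed
qed

definition ultra_map ::
  "nat filter \<Rightarrow> (nat \<Rightarrow> ('c, 'm) monoid_scheme) \<Rightarrow> (nat \<Rightarrow> 'a \<Rightarrow> 'c) \<Rightarrow> 'a \<Rightarrow> (nat \<Rightarrow> 'c) set" where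
  "ultra_map \<omega> L \<psi> x = ultra_null \<omega> L #>\<^bsub>prod_grp L\<^esub> (\<lambda>i. \<psi> i x)"

lemma hom_family_in_carrier_prod_grp:
  "(\<And>i. \<psi> i \<in> hom G (L i)) \<Longrightarrow> x \<in> carrier G \<Longrightarrow> (\<lambda>i. \<psi> i x) \<in> carrier (prod_grp L)"
  unfolding carrier_prod_grp by (blast intro: hom_in_carrier)

lemma ultra_map_hom:
  assumes L: "\<And>i. group (L i)" and \<psi>: "\<And>i. \<psi> i \<in> hom G (L i)"
  shows "ultra_map \<omega> L \<psi> \<in> hom G (ultraprod \<omega> L)"
proof -
  interpret N: normal "ultra_null \<omega> L" "prod_grp L" using L by (rule normal_ultra_null)
  have "(\<lambda>x i. \<psi> i x) \<in> hom G (prod_grp L)"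
    using \<psi> hom_family_in_carrier_prod_grp[OF \<psi>] by (auto simp: hom_def mult_prod_grp)
  with N.r_coset_hom_Mod show ?thesis
    unfolding ultra_map_def ultraprod_def by (auto simp: hom_def)
qed

lemma ultra_map_eqD:
  assumes L: "\<And>i. group (L i)" and \<psi>: "\<And>i. \<psi> i \<in> hom G (L i)"
    and x: "x \<in> carrier G" and y: "y \<in> carrier G"
    and eq: "ultra_map \<omega> L \<psi> x = ultra_map \<omega> L \<psi> y"
  shows "eventually (\<lambda>i. \<psi> i x = \<psi> i y) \<omega>"
  using ultra_null_rcos_eqD[OF L hom_family_in_carrier_prod_grp[OF \<psi> x]
      hom_family_in_carrier_prod_grp[OF \<psi> y]] eq
  unfolding ultra_map_def .

lemma inj_on_ultra_map:
  assumes "\<omega> \<noteq> bot" and L: "\<And>i. group (L i)" and \<psi>: "\<And>i. \<psi> i \<in> hom G (L i)"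
    and inj: "\<And>i. inj_on (\<psi> i) (carrier G)"
  shows "inj_on (ultra_map \<omega> L \<psi>) (carrier G)"
proof (rule inj_onI)
  fix x y assume x: "x \<in> carrier G" and y: "y \<in> carrier G"
    and eq: "ultra_map \<omega> L \<psi> x = ultra_map \<omega> L \<psi> y"
  have "eventually (\<lambda>i. \<psi> i x = \<psi> i y) \<omega>"
    using ultra_map_eqD[OF L \<psi> x y eq] .
  then have "eventually (\<lambda>i. x = y) \<omega>"
    by (rule eventually_mono) (use inj x y in \<open>blast dest: inj_onD\<close>)
  with \<open>\<omega> \<noteq> bot\<close> show "x = y" by simp
qed

lemma ultra_map_in_ultra_subsetI:
  assumes \<psi>: "\<And>i. \<psi> i \<in> hom G (L i)" and x: "x \<in> carrier G" and S: "\<And>i. \<psi> i x \<in> S i"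
  shows "ultra_map \<omega> L \<psi> x \<in> ultra_subset \<omega> L S"
  using S hom_family_in_carrier_prod_grp[OF \<psi> x]
  by (auto simp: ultra_map_def ultra_subset_def)

lemma ultra_map_in_ultra_subsetD:
  assumes L: "\<And>i. group (L i)" and \<psi>: "\<And>i. \<psi> i \<in> hom G (L i)" and x: "x \<in> carrier G"
    and "ultra_map \<omega> L \<psi> x \<in> ultra_subset \<omega> L S"
  shows "eventually (\<lambda>i. \<psi> i x \<in> S i) \<omega>"
proof -
  obtain f where f: "f \<in> carrier (prod_grp L)" and S: "\<And>i. f i \<in> S i"
    and eq: "ultra_map \<omega> L \<psi> x = ultra_null \<omega> L #>\<^bsub>prod_grp L\<^esub> f"
    using assms(4) unfolding ultra_subset_def by blast
  have "eventually (\<lambda>i. \<psi> i x = f i) \<omega>"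
    using ultra_null_rcos_eqD[OF L hom_family_in_carrier_prod_grp[OF \<psi> x] f]
      eq[unfolded ultra_map_def] .
  then show ?thesis
    by (rule eventually_mono) (simp add: S)
qed

lemma FactGroup_restrict_carrier:
  "(G Mod N)\<lparr>carrier := rcosets\<^bsub>G\<lparr>carrier := K\<rparr>\<^esub> N\<rparr> = G\<lparr>carrier := K\<rparr> Mod N"
  unfolding FactGroup_def set_mult_def by simp

lemma (in group) rcos_in_rcosets_restrict_iff:
  assumes "subgroup N G" and "N \<subseteq> K" and K: "subgroup K G" and x: "x \<in> carrier G"
  shows "N #> x \<in> rcosets\<^bsub>G\<lparr>carrier := K\<rparr>\<^esub> N \<longleftrightarrow> x \<in> K"
proof
  assume "N #> x \<in> rcosets\<^bsub>G\<lparr>carrier := K\<rparr>\<^esub> N"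
  then obtain k where k: "k \<in> K" and eq: "N #> x = N #> k"
    by (auto simp: RCOSETS_def r_coset_def)
  have "x \<in> N #> k"
    using rcos_self[OF x \<open>subgroup N G\<close>] eq by simp
  then obtain n where "n \<in> N" and "x = n \<otimes> k"
    unfolding r_coset_def by blast
  then show "x \<in> K"
    using k \<open>N \<subseteq> K\<close> subgroup.m_closed[OF K] by blast
next
  assume "x \<in> K"
  then show "N #> x \<in> rcosets\<^bsub>G\<lparr>carrier := K\<rparr>\<^esub> N"
    by (auto simp: RCOSETS_def r_coset_def)
qed

lemma (in normal) rcos_pair_hom:
  "(\<lambda>x. (H #> x, x)) \<in> hom G ((G Mod H) \<times>\<times> G)"
  using r_coset_hom_Mod by (auto simp: hom_def)

lemma (in group) cosofic_ultra_embedding: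
  assumes \<omega>: "free_ultrafilter \<omega>"
    and dec: "\<And>i. Gs (Suc i) \<subseteq> Gs i" and H: "(\<Inter>i. Gs i) = H"
    and Gs: "\<And>i. subgroup (Gs i) G" and Hs: "\<And>i. Hs i \<lhd> G" and Hs_Gs: "\<And>i. Hs i \<subseteq> Gs i"
  defines "L \<equiv> \<lambda>i. (G Mod Hs i) \<times>\<times> G" and "\<psi> \<equiv> \<lambda>i x. (Hs i #> x, x)"
  shows "ultra_map \<omega> L \<psi> \<in> hom G (ultraprod \<omega> L)"
    and "inj_on (ultra_map \<omega> L \<psi>) (carrier G)"
    and "ultra_map \<omega> L \<psi> ` carrier G
           \<inter> ultra_subset \<omega> L (\<lambda>i. (rcosets\<^bsub>G\<lparr>carrier := Gs i\<rparr>\<^esub> (Hs i)) \<times> carrier G)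
         = ultra_map \<omega> L \<psi> ` H"
proof -
  let ?\<pi> = "ultra_map \<omega> L \<psi>"
  let ?S = "\<lambda>i. (rcosets\<^bsub>G\<lparr>carrier := Gs i\<rparr>\<^esub> (Hs i)) \<times> carrier G"
  have L: "group (L i)" for i
    unfolding L_def using normal.factorgroup_is_group[OF Hs] is_group by (rule DirProd_group)
  have \<psi>: "\<psi> i \<in> hom G (L i)" for i
    unfolding L_def \<psi>_def using Hs by (rule normal.rcos_pair_hom)
  have S_iff: "\<psi> i x \<in> ?S i \<longleftrightarrow> x \<in> Gs i" if "x \<in> carrier G" for i x
    using rcos_in_rcosets_restrict_iff[OF normal_imp_subgroup[OF Hs] Hs_Gs Gs that] that
    by (simp add: \<psi>_def)
  show "?\<pi> \<in> hom G (ultraprod \<omega> L)" using L \<psi> by (rule ultra_map_hom)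
  show "inj_on ?\<pi> (carrier G)"
    using \<omega> L \<psi>
    by (intro inj_on_ultra_map) (auto simp: free_ultrafilter_def inj_on_def \<psi>_def)
  have "H \<subseteq> carrier G"
    using H subgroup.subset[OF Gs] by blast
  moreover have "?\<pi> x \<in> ultra_subset \<omega> L ?S \<longleftrightarrow> x \<in> H" if x: "x \<in> carrier G" for x
  proof
    assume "?\<pi> x \<in> ultra_subset \<omega> L ?S"
    with L \<psi> x have "eventually (\<lambda>i. \<psi> i x \<in> ?S i) \<omega>"
      by (rule ultra_map_in_ultra_subsetD)
    then have "eventually (\<lambda>i. x \<in> Gs i) \<omega>"
      by (simp add: S_iff[OF x])
    then show "x \<in> H"
      using free_ultrafilter_eventually_decseq_mem[where A = Gs, OF \<omega> dec] H by blast
  next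
    assume "x \<in> H"
    then show "?\<pi> x \<in> ultra_subset \<omega> L ?S"
      using H S_iff[OF x] by (intro ultra_map_in_ultra_subsetI[OF \<psi> x]) blast
  qed
  ultimately show "?\<pi> ` carrier G \<inter> ultra_subset \<omega> L ?S = ?\<pi> ` H"
    by blast
qed

theorem theorem2p17:
  fixes G :: "('a, 'b) monoid_scheme" and H :: "'a set"
  assumes "group G" and "subgroup H G" and "cosofic G H"
  shows "relatively_sofic_in TYPE('a set) G H G"
proof -
  interpret G: group G by fact
  obtain Gs Hs :: "nat \<Rightarrow> 'a set" where
    dec: "\<And>i. Gs (Suc i) \<subseteq> Gs i" and H: "(\<Inter>i. Gs i) = H" and
    Gs: "\<And>i. subgroup (Gs i) G" and Hs_sub: "\<And>i. subgroup (Hs i) (G\<lparr>carrier := Gs i\<rparr>)" and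
    Hs: "\<And>i. Hs i \<lhd> G" and sofic: "\<And>i. sofic (G Mod Hs i)" and
    amenable: "\<And>i. amenable (G\<lparr>carrier := Gs i\<rparr> Mod Hs i)"
    using assms(3) unfolding cosofic_def by blast
  have Hs_Gs: "Hs i \<subseteq> Gs i" for i
    using subgroup.subset[OF Hs_sub] by simp
  obtain \<omega> where \<omega>: "free_ultrafilter \<omega>"
    using free_ultrafilter_exists by blast
  have quotients: "group (G Mod Hs i) \<and> sofic (G Mod Hs i)
      \<and> subgroup (rcosets\<^bsub>G\<lparr>carrier := Gs i\<rparr>\<^esub> (Hs i)) (G Mod Hs i)
      \<and> amenable ((G Mod Hs i)\<lparr>carrier := rcosets\<^bsub>G\<lparr>carrier := Gs i\<rparr>\<^esub> (Hs i)\<rparr>)" for i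
    using normal.factorgroup_is_group[OF Hs] sofic G.normal_subgroup_factorize[OF Hs Hs_Gs Gs]
      amenable by (simp add: FactGroup_restrict_carrier)
  show ?thesis
    unfolding relatively_sofic_in_def
    using quotients \<omega> G.cosofic_ultra_embedding[OF \<omega> dec H Gs Hs Hs_Gs]
    by (intro exI[of _ "\<lambda>i. G Mod Hs i"] exI[of _ "\<lambda>i. rcosets\<^bsub>G\<lparr>carrier := Gs i\<rparr>\<^esub> (Hs i)"]
        conjI) blast+
qed

end
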